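(* In the setting below, for every $x\in\mathbb{R}^2$, $n\ge1$, $r\ge1$, the residual tail dependence coefficient $\eta^{(Y,r)}_{(x)}$ of $(Y_n(x),Y_{n+r}(x))$ equals $$\eta^{(Y,r)}_{(x)}=\begin{cases}\max(1/2,\alpha(x)),& \alpha(x)<1\text{ and } r=1,\\ 1,&\alpha(x)\ge1\text{ and } r=1,\\ 1/2,&\text{otherwise (i.e. } r\ge2).\end{cases}$$
   Context: Setting: $\{\widehat X_n(x):x\in\mathbb{R}^2\}_{n\ge0}$ is an i.i.d. sequence of random fields whose variables $\widehat X_n(x)$ are all mutually independent with standard Fréchet distribution ($P(\cdot\le z)=e^{-1/z}$, $z>0$); $X_n(x)=\tfrac23\widehat X_n(x)\vee\tfrac13\widehat X_{n-1}(x)$; $\{Z_n\}_{n\ge1}$ are i.i.d. standard Fréchet, independent of $\{\widehat X_n\}$; $\alpha:\mathbb{R}^2\to(0,\infty)$; $Y_n(x)=X_n(x)\vee Z_n^{1/\alpha(x)}$. The residual (Ledford–Tawn) tail dependence coefficient of $(Y_n(x),Y_{n+r}(x))$ is the number $\eta\in(0,1]$ such that $P(Y_{n+r}(x)>y,Y_n(x)>y)\sim P(Y_n(x)>y)^{1/\eta}\mathcal{L}(y)$ as $y\to\infty$ for some slowly varying function $\mathcal{L}$ (i.e. $\mathcal{L}(ty)/\mathcal{L}(y)\to1$ for all $t>0$). *)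

theory Defs
  imports "HOL-Probability.Probability" "HOL-Library.Landau_Symbols"
begin

definition std_frechet :: "'a measure \<Rightarrow> ('a \<Rightarrow> real) \<Rightarrow> bool" where
  "std_frechet M X \<longleftrightarrow> X \<in> borel_measurable M \<and>
     (\<forall>z>0. measure M {\<omega> \<in> space M. X \<omega> \<le> z} = exp (- 1 / z))"

definition slowly_varying :: "(real \<Rightarrow> real) \<Rightarrow> bool" where
  "slowly_varying L \<longleftrightarrow> (\<forall>t>0. ((\<lambda>y. L (t * y) / L y) \<longlongrightarrow> 1) at_top)"

definition residual_tdc :: "'a measure \<Rightarrow> ('a \<Rightarrow> real) \<Rightarrow> ('a \<Rightarrow> real) \<Rightarrow> real \<Rightarrow> bool" where
  "residual_tdc M U V \<eta> \<longleftrightarrow> 0 < \<eta> \<and> \<eta> \<le> 1 \<and>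
     (\<exists>L. slowly_varying L \<and>
        (\<lambda>y. measure M {\<omega> \<in> space M. V \<omega> > y \<and> U \<omega> > y})
          \<sim>[at_top] (\<lambda>y. measure M {\<omega> \<in> space M. U \<omega> > y} powr (1 / \<eta>) * L y))"

definition Xfield :: "(nat \<Rightarrow> real^2 \<Rightarrow> 'a \<Rightarrow> real) \<Rightarrow> nat \<Rightarrow> real^2 \<Rightarrow> 'a \<Rightarrow> real" where
  "Xfield Xh n x \<omega> = max (2/3 * Xh n x \<omega>) (1/3 * Xh (n - 1) x \<omega>)"

definition Yfield :: "(nat \<Rightarrow> real^2 \<Rightarrow> 'a \<Rightarrow> real) \<Rightarrow> (nat \<Rightarrow> 'a \<Rightarrow> real) \<Rightarrow> (real^2 \<Rightarrow> real)
    \<Rightarrow> nat \<Rightarrow> real^2 \<Rightarrow> 'a \<Rightarrow> real" where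
  "Yfield Xh Z \<alpha> n x \<omega> = max (Xfield Xh n x \<omega>) (Z n \<omega> powr (1 / \<alpha> x))"

definition joint_family :: "(nat \<Rightarrow> real^2 \<Rightarrow> 'a \<Rightarrow> real) \<Rightarrow> (nat \<Rightarrow> 'a \<Rightarrow> real)
    \<Rightarrow> (nat \<times> (real^2)) + nat \<Rightarrow> 'a \<Rightarrow> real" where
  "joint_family Xh Z i = (case i of Inl (n, x) \<Rightarrow> Xh n x | Inr n \<Rightarrow> Z n)"

end

theory Submission
  imports Defs "HOL-Real_Asymp.Real_Asymp"
begin

text \<open>Put a = alpha(x) and u(y) = 1/y + y^-a. The event Y_n(x) <= y is, almost surely,
  X^_(n-1) <= 3y, X^_n <= 3y/2 and Z_n <= y^a, so independence gives P(Y_n <= y) = exp(-u(y)) and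
  p(y) = P(Y_n > y) ~ u(y). For r >= 2 the two maxima are built from disjoint sets of variables,
  the joint tail is exactly p^2 and eta = 1/2. For r = 1 they share X^_n, and inclusion-exclusion
  gives the joint tail p^2 + D with D(y) ~ 1/(3y). Which term wins is decided by the scale
  y^eta u(y): it has a positive limit for the claimed eta when a >= 1/2 and tends to infinity when
  a < 1/2. In every case (p^2 + D) / p^(1/eta) tends to a positive constant, and this ratio is the
  slowly varying function.\<close>

text \<open>In the notation above, tail_rate, tail_prob and lag_one_excess are u, p and D, and
  lag_one_eta is the claimed eta for r = 1.\<close>

definition tail_rate :: "real \<Rightarrow> real \<Rightarrow> real" where
  "tail_rate a y = 1 / y + y powr -a"

definition tail_prob :: "real \<Rightarrow> real \<Rightarrow> real" where
  "tail_prob a y = 1 - exp (- tail_rate a y)"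

definition lag_one_excess :: "real \<Rightarrow> real \<Rightarrow> real" where
  "lag_one_excess a y = exp (-2 * tail_rate a y) * (exp (1 / (3 * y)) - 1)"

definition lag_one_eta :: "real \<Rightarrow> real" where
  "lag_one_eta a = (if a < 1 then max (1/2) a else 1)"

lemma tail_rate_pos: "0 < y \<Longrightarrow> 0 < tail_rate a y"
  by (simp add: tail_rate_def add_pos_nonneg)

lemma tail_prob_pos: "0 < y \<Longrightarrow> 0 < tail_prob a y"
  using tail_rate_pos[of y a] by (simp add: tail_prob_def)

lemma exp_double_tail_rate: "exp (- (2 * tail_rate a y)) = exp (- tail_rate a y) ^ 2"
  by (simp add: power2_eq_square mult_exp_exp)

lemma tendsto_tail_rate: "0 < a \<Longrightarrow> (tail_rate a \<longlongrightarrow> 0) at_top"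
proof -
  assume "0 < a"
  have "((\<lambda>y::real. 1 / y) \<longlongrightarrow> 0) at_top" by real_asymp
  moreover have "((\<lambda>y. y powr -a) \<longlongrightarrow> 0) at_top"
    using \<open>0 < a\<close> by (intro tendsto_neg_powr filterlim_ident) auto
  ultimately show ?thesis
    unfolding tail_rate_def[abs_def] by (rule tendsto_add_zero)
qed

lemma tendsto_tail_prob_over_tail_rate:
  assumes "0 < a"
  shows "((\<lambda>y. tail_prob a y / tail_rate a y) \<longlongrightarrow> 1) at_top"
proof -
  have "((\<lambda>v::real. (1 - exp (-v)) / v) \<longlongrightarrow> 1) (at_right 0)" by real_asymp
  moreover have "filterlim (tail_rate a) (at_right 0) at_top"
  proof (rule tendsto_imp_filterlim_at_right[OF tendsto_tail_rate[OF assms]])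
    show "\<forall>\<^sub>F y in at_top. 0 < tail_rate a y"
      using eventually_gt_at_top[of 0] by eventually_elim (rule tail_rate_pos)
  qed
  ultimately show ?thesis
    unfolding tail_prob_def by (rule filterlim_compose)
qed

lemma tendsto_y_times_lag_one_excess:
  assumes "0 < a"
  shows "((\<lambda>y. y * lag_one_excess a y) \<longlongrightarrow> 1/3) at_top"
proof -
  have "((\<lambda>y. exp (-2 * tail_rate a y)) \<longlongrightarrow> exp (-2 * 0)) at_top"
    by (intro tendsto_intros tendsto_tail_rate assms)
  moreover have "((\<lambda>y::real. y * (exp (1 / (3 * y)) - 1)) \<longlongrightarrow> 1/3) at_top" by real_asymp
  ultimately have "((\<lambda>y. exp (-2 * tail_rate a y) * (y * (exp (1 / (3 * y)) - 1))) \<longlongrightarrow> 1 * (1/3)) at_top"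
    by (intro tendsto_mult) auto
  then show ?thesis by (simp add: lag_one_excess_def mult.left_commute)
qed

lemma powr_mult_tail_rate: "0 < y \<Longrightarrow> y powr b * tail_rate a y = y powr (b - 1) + y powr (b - a)"
  by (simp add: tail_rate_def distrib_left powr_diff powr_minus divide_inverse)

lemma tendsto_powr_nonpos:
  assumes "b \<le> 0"
  shows "((\<lambda>y::real. y powr b) \<longlongrightarrow> (if b = 0 then 1 else 0)) at_top"
proof (cases "b = 0")
  case True
  have "\<forall>\<^sub>F y in at_top. (y::real) powr b = 1"
    using eventually_gt_at_top[of 0] by eventually_elim (simp add: True)
  then show ?thesis using True by (simp add: tendsto_eventually)
next
  case False
  then show ?thesis using assms by (auto intro: tendsto_neg_powr filterlim_ident)
qed

lemma tendsto_tail_prob: "0 < a \<Longrightarrow> (tail_prob a \<longlongrightarrow> 0) at_top"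
  unfolding tail_prob_def[abs_def]
  by (rule tendsto_eq_intros tendsto_tail_rate | simp)+

lemma tendsto_tail_prob_powr:
  assumes "0 < a" "0 \<le> b"
  shows "((\<lambda>y. tail_prob a y powr b) \<longlongrightarrow> (if b = 0 then 1 else 0)) at_top"
proof (cases "b = 0")
  case True
  have "\<forall>\<^sub>F y in at_top. tail_prob a y powr b = 1"
    using eventually_gt_at_top[of 0] by eventually_elim (auto simp: True dest: tail_prob_pos[of _ a])
  then show ?thesis using True by (simp add: tendsto_eventually)
next
  case False
  have "\<forall>\<^sub>F y in at_top. 0 \<le> tail_prob a y"
    using eventually_gt_at_top[of 0] by eventually_elim (rule less_imp_le[OF tail_prob_pos])
  then have "((\<lambda>y. tail_prob a y powr b) \<longlongrightarrow> 0 powr b) at_top"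
    using False assms by (intro tendsto_powr' tendsto_tail_prob tendsto_const) auto
  then show ?thesis using False by simp
qed

lemma lag_one_eta_bounds: "1/2 \<le> lag_one_eta a" "lag_one_eta a \<le> 1"
  by (auto simp: lag_one_eta_def)

lemma tendsto_scaled_tail_rate:
  assumes "1/2 \<le> a"
  shows "\<exists>k>0. ((\<lambda>y. y powr lag_one_eta a * tail_rate a y) \<longlongrightarrow> k) at_top"
proof -
  let ?\<eta> = "lag_one_eta a"
  have \<eta>: "?\<eta> \<le> 1" "?\<eta> \<le> a" "?\<eta> = 1 \<or> ?\<eta> = a"
    using assms by (auto simp: lag_one_eta_def)
  let ?k = "(if ?\<eta> - 1 = 0 then 1 else 0) + (if ?\<eta> - a = 0 then 1 else 0) :: real"
  have "((\<lambda>y. y powr (?\<eta> - 1) + y powr (?\<eta> - a)) \<longlongrightarrow> ?k) at_top"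
    using \<eta> by (intro tendsto_add tendsto_powr_nonpos) auto
  moreover have "\<forall>\<^sub>F y in at_top. y powr (?\<eta> - 1) + y powr (?\<eta> - a) = y powr ?\<eta> * tail_rate a y"
    using eventually_gt_at_top[of 0] by eventually_elim (simp add: powr_mult_tail_rate)
  ultimately have "((\<lambda>y. y powr ?\<eta> * tail_rate a y) \<longlongrightarrow> ?k) at_top"
    by (rule Lim_transform_eventually)
  moreover have "?k > 0" using \<eta> by auto
  ultimately show ?thesis by blast
qed

lemma filterlim_scaled_tail_rate:
  assumes "a < 1/2"
  shows "filterlim (\<lambda>y. y powr lag_one_eta a * tail_rate a y) at_top at_top"
proof -
  have lim: "filterlim (\<lambda>y. y powr (-1/2) + y powr (1/2 - a)) at_top at_top"
    using assms by (intro filterlim_tendsto_add_at_top[OF tendsto_neg_powr] real_powr_at_top)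
      (auto intro: filterlim_ident)
  have ev: "\<forall>\<^sub>F y in at_top. y powr (-1/2) + y powr (1/2 - a) = y powr lag_one_eta a * tail_rate a y"
    using eventually_gt_at_top[of 0]
    by eventually_elim (use assms in \<open>simp add: powr_mult_tail_rate lag_one_eta_def\<close>)
  show ?thesis using lim filterlim_cong[OF refl refl ev] by simp
qed

lemma eventually_scaled_tail_prob_powr:
  assumes "0 < \<eta>"
  shows "\<forall>\<^sub>F y in at_top. (y powr \<eta> * tail_rate a y * (tail_prob a y / tail_rate a y)) powr (1 / \<eta>)
    = y * tail_prob a y powr (1 / \<eta>)"
  using eventually_gt_at_top[of 0]
proof eventually_elim
  case (elim y)
  then have "y powr \<eta> * tail_rate a y * (tail_prob a y / tail_rate a y) = y powr \<eta> * tail_prob a y"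
    using tail_rate_pos[of y a] by simp
  then show ?case
    using elim assms tail_prob_pos[of y a] by (simp add: powr_mult powr_powr)
qed

lemma tendsto_y_times_tail_prob_powr:
  assumes "1/2 \<le> a"
  shows "\<exists>l>0. ((\<lambda>y. y * tail_prob a y powr (1 / lag_one_eta a)) \<longlongrightarrow> l) at_top"
proof -
  let ?\<eta> = "lag_one_eta a"
  obtain k where k: "0 < k" "((\<lambda>y. y powr ?\<eta> * tail_rate a y) \<longlongrightarrow> k) at_top"
    using tendsto_scaled_tail_rate[OF assms] by blast
  have \<eta>: "0 < ?\<eta>" using lag_one_eta_bounds(1)[of a] by simp
  have "((\<lambda>y. (y powr ?\<eta> * tail_rate a y * (tail_prob a y / tail_rate a y)) powr (1 / ?\<eta>))
      \<longlongrightarrow> (k * 1) powr (1 / ?\<eta>)) at_top"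
    using assms k by (intro tendsto_powr tendsto_mult tendsto_tail_prob_over_tail_rate tendsto_const) auto
  from Lim_transform_eventually[OF this eventually_scaled_tail_prob_powr[OF \<eta>]]
  have "((\<lambda>y. y * tail_prob a y powr (1 / ?\<eta>)) \<longlongrightarrow> k powr (1 / ?\<eta>)) at_top"
    by simp
  then show ?thesis using k(1) by (intro exI[of _ "k powr (1 / ?\<eta>)"]) simp
qed

lemma filterlim_y_times_tail_prob_powr:
  assumes "0 < a" "a < 1/2"
  shows "filterlim (\<lambda>y. y * tail_prob a y powr (1 / lag_one_eta a)) at_top at_top"
proof -
  let ?\<eta> = "lag_one_eta a"
  have "filterlim (\<lambda>y. y powr ?\<eta> * tail_rate a y * (tail_prob a y / tail_rate a y)) at_top at_top"
    by (rule filterlim_at_top_mult_tendsto_pos[OF tendsto_tail_prob_over_tail_rate[OF assms(1)] _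
          filterlim_scaled_tail_rate[OF assms(2)]]) simp
  moreover have \<eta>: "0 < ?\<eta>" using lag_one_eta_bounds(1)[of a] by simp
  ultimately have lim: "filterlim (\<lambda>y. (y powr ?\<eta> * tail_rate a y * (tail_prob a y / tail_rate a y)) powr (1 / ?\<eta>))
      at_top at_top"
    by (intro filterlim_compose[OF real_powr_at_top]) simp_all
  show ?thesis
    using lim filterlim_cong[OF refl refl eventually_scaled_tail_prob_powr[OF \<eta>]] by simp
qed

lemma tendsto_lag_one_ratio:
  assumes "0 < a"
  shows "\<exists>c>0. ((\<lambda>y. (tail_prob a y ^ 2 + lag_one_excess a y) / tail_prob a y powr (1 / lag_one_eta a))
    \<longlongrightarrow> c) at_top"
proof -
  let ?p = "tail_prob a" and ?e = "1 / lag_one_eta a"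
  let ?c1 = "if 2 - ?e = 0 then 1 else 0 :: real"
  have e: "0 \<le> 2 - ?e"
    using lag_one_eta_bounds(1)[of a] by (simp add: divide_le_eq)
  txt \<open>For a < 1/2 the second summand vanishes; otherwise it tends to (1/3)/l with l > 0.\<close>
  have split: "\<forall>\<^sub>F y in at_top. ?p y powr (2 - ?e) + y * lag_one_excess a y / (y * ?p y powr ?e)
      = (?p y ^ 2 + lag_one_excess a y) / ?p y powr ?e"
    using eventually_gt_at_top[of 0]
  proof eventually_elim
    case (elim y)
    have "?p y powr 2 = ?p y ^ 2"
      using tail_prob_pos[OF elim, of a] by (simp add: powr_numeral)
    then have "?p y ^ 2 / ?p y powr ?e = ?p y powr (2 - ?e)"
      by (simp add: powr_diff)
    moreover have "y * lag_one_excess a y / (y * ?p y powr ?e) = lag_one_excess a y / ?p y powr ?e"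
      using elim by (rule mult_divide_mult_cancel_left[OF less_imp_neq[symmetric]])
    ultimately show ?case by (simp add: add_divide_distrib)
  qed
  obtain c2 where c2: "((\<lambda>y. y * lag_one_excess a y / (y * ?p y powr ?e)) \<longlongrightarrow> c2) at_top"
    and pos: "0 < ?c1 + c2"
  proof (cases "a < 1/2")
    case True
    have "((\<lambda>y. y * lag_one_excess a y / (y * ?p y powr ?e)) \<longlongrightarrow> 0) at_top"
      by (rule tendsto_divide_0[OF tendsto_y_times_lag_one_excess[OF assms]
            filterlim_at_top_imp_at_infinity[OF filterlim_y_times_tail_prob_powr[OF assms True]]])
    moreover have "?c1 = 1" using True by (simp add: lag_one_eta_def)
    ultimately show ?thesis by (intro that) auto
  next
    case False
    then obtain l where l: "0 < l" "((\<lambda>y. y * ?p y powr ?e) \<longlongrightarrow> l) at_top"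
      using tendsto_y_times_tail_prob_powr[of a] by auto
    have "((\<lambda>y. y * lag_one_excess a y / (y * ?p y powr ?e)) \<longlongrightarrow> (1/3) / l) at_top"
      using l by (intro tendsto_divide tendsto_y_times_lag_one_excess assms) auto
    moreover have "0 < ?c1 + (1/3) / l" using l(1) by (intro add_nonneg_pos) auto
    ultimately show ?thesis by (rule that)
  qed
  have "((\<lambda>y. ?p y powr (2 - ?e) + y * lag_one_excess a y / (y * ?p y powr ?e)) \<longlongrightarrow> ?c1 + c2) at_top"
    by (intro tendsto_add tendsto_tail_prob_powr assms e c2)
  from Lim_transform_eventually[OF this split] show ?thesis
    using pos by blast
qed

lemma powr_inverse_le_iff:
  fixes u y e :: real
  assumes "0 < u" "0 < y" "0 < e"
  shows "u powr (1 / e) \<le> y \<longleftrightarrow> u \<le> y powr e"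
proof
  assume "u powr (1 / e) \<le> y"
  then have "(u powr (1 / e)) powr e \<le> y powr e" using assms by (intro powr_mono2) auto
  then show "u \<le> y powr e" using assms by (simp add: powr_powr)
next
  assume "u \<le> y powr e"
  then have "u powr (1 / e) \<le> (y powr e) powr (1 / e)" using assms by (intro powr_mono2) auto
  then show "u powr (1 / e) \<le> y" using assms by (simp add: powr_powr)
qed

lemma tendsto_imp_slowly_varying:
  assumes "(L \<longlongrightarrow> c) at_top" "c \<noteq> 0"
  shows "slowly_varying L"
  unfolding slowly_varying_def
proof (intro allI impI)
  fix t :: real
  assume "0 < t"
  then have "filterlim (\<lambda>y. t * y) at_top at_top"
    by (intro filterlim_tendsto_pos_mult_at_top[OF tendsto_const _ filterlim_ident])
  then have "((\<lambda>y. L (t * y)) \<longlongrightarrow> c) at_top"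
    using assms(1) by (rule filterlim_compose[rotated])
  then have "((\<lambda>y. L (t * y) / L y) \<longlongrightarrow> c / c) at_top"
    using assms by (intro tendsto_divide) auto
  then show "((\<lambda>y. L (t * y) / L y) \<longlongrightarrow> 1) at_top"
    using assms(2) by simp
qed

lemma residual_tdc_if_tendsto_ratio:
  assumes "0 < \<eta>" "\<eta> \<le> 1"
    and "\<forall>\<^sub>F y in at_top. 0 < measure M {\<omega> \<in> space M. U \<omega> > y}"
    and "((\<lambda>y. measure M {\<omega> \<in> space M. V \<omega> > y \<and> U \<omega> > y}
        / measure M {\<omega> \<in> space M. U \<omega> > y} powr (1 / \<eta>)) \<longlongrightarrow> c) at_top"
    and "c \<noteq> 0"
  shows "residual_tdc M U V \<eta>"
proof -
  let ?P = "\<lambda>y. measure M {\<omega> \<in> space M. U \<omega> > y}"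
  let ?Q = "\<lambda>y. measure M {\<omega> \<in> space M. V \<omega> > y \<and> U \<omega> > y}"
  have "?Q \<sim>[at_top] (\<lambda>y. ?P y powr (1 / \<eta>) * (?Q y / ?P y powr (1 / \<eta>)))"
    by (rule asymp_equiv_refl_ev) (use assms(3) in \<open>auto elim!: eventually_mono\<close>)
  then show ?thesis
    using assms tendsto_imp_slowly_varying unfolding residual_tdc_def by blast
qed

lemma (in prob_space) prob_both_gt:
  fixes U V :: "'a \<Rightarrow> real"
  assumes "{\<omega> \<in> space M. U \<omega> \<le> y} \<in> events" "{\<omega> \<in> space M. V \<omega> \<le> y} \<in> events"
  shows "prob {\<omega> \<in> space M. V \<omega> > y \<and> U \<omega> > y}
    = 1 - prob {\<omega> \<in> space M. U \<omega> \<le> y} - prob {\<omega> \<in> space M. V \<omega> \<le> y}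
      + prob {\<omega> \<in> space M. U \<omega> \<le> y \<and> V \<omega> \<le> y}"
proof -
  let ?A = "{\<omega> \<in> space M. U \<omega> \<le> y}" and ?B = "{\<omega> \<in> space M. V \<omega> \<le> y}"
  have "{\<omega> \<in> space M. V \<omega> > y \<and> U \<omega> > y} = space M - (?A \<union> ?B)"
    and "{\<omega> \<in> space M. U \<omega> \<le> y \<and> V \<omega> \<le> y} = ?A \<inter> ?B"
    by auto
  then show ?thesis
    using prob_compl[OF sets.Un[OF assms]] measure_Un3[of ?A M ?B] assms
    by (simp add: fmeasurable_eq_sets)
qed

lemma (in prob_space) std_frechet_AE_pos:
  assumes "std_frechet M X"
  shows "AE \<omega> in M. 0 < X \<omega>"
proof -
  have X: "X \<in> borel_measurable M" using assms by (simp add: std_frechet_def)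
  let ?N = "{\<omega> \<in> space M. X \<omega> \<le> 0}"
  have bound: "prob ?N \<le> exp (-1 / \<epsilon>)" if "0 < \<epsilon>" for \<epsilon>
  proof -
    have "prob ?N \<le> prob {\<omega> \<in> space M. X \<omega> \<le> \<epsilon>}"
      using that X by (intro finite_measure_mono) auto
    then show ?thesis using assms that by (simp add: std_frechet_def)
  qed
  have "((\<lambda>\<epsilon>::real. exp (-1 / \<epsilon>)) \<longlongrightarrow> 0) (at_right 0)" by real_asymp
  moreover have "\<forall>\<^sub>F \<epsilon> in at_right 0. prob ?N \<le> exp (-1 / \<epsilon>)"
    using eventually_at_right_less[of 0] by eventually_elim (rule bound)
  ultimately have "prob ?N \<le> 0"
    by (rule tendsto_lowerbound) simp
  then have "?N \<in> null_sets M"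
    using X by (intro null_setsI) (auto simp: emeasure_eq_measure measure_nonneg antisym)
  then show ?thesis by (rule AE_I') auto
qed

lemma (in prob_space) prob_indep_vars_all_in:
  assumes "indep_vars (\<lambda>_. borel) F I" "J \<subseteq> I" "finite J" "\<And>j. j \<in> J \<Longrightarrow> A j \<in> sets borel"
  shows "prob {\<omega> \<in> space M. \<forall>j\<in>J. F j \<omega> \<in> A j} = (\<Prod>j\<in>J. prob {\<omega> \<in> space M. F j \<omega> \<in> A j})"
proof (cases "J = {}")
  case True
  then show ?thesis by (simp add: prob_space)
next
  case False
  have "prob (\<Inter>j\<in>J. F j -` A j \<inter> space M) = (\<Prod>j\<in>J. prob (F j -` A j \<inter> space M))"
    using assms(1) unfolding indep_vars_def2
    by (intro indep_setsD) (use assms False in blast)+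
  moreover have "{\<omega> \<in> space M. \<forall>j\<in>J. F j \<omega> \<in> A j} = (\<Inter>j\<in>J. F j -` A j \<inter> space M)"
    using False by auto
  moreover have "{\<omega> \<in> space M. F j \<omega> \<in> A j} = F j -` A j \<inter> space M" for j
    by auto
  ultimately show ?thesis by simp
qed

lemma (in prob_space) prob_indep_std_frechet_all_le:
  assumes "indep_vars (\<lambda>_. borel) F I" "J \<subseteq> I" "finite J"
    and "\<And>j. j \<in> J \<Longrightarrow> std_frechet M (F j)" "\<And>j. j \<in> J \<Longrightarrow> 0 < t j"
  shows "prob {\<omega> \<in> space M. \<forall>j\<in>J. F j \<omega> \<le> t j} = exp (- (\<Sum>j\<in>J. 1 / t j))"
proof -
  have "prob {\<omega> \<in> space M. \<forall>j\<in>J. F j \<omega> \<le> t j} = (\<Prod>j\<in>J. prob {\<omega> \<in> space M. F j \<omega> \<in> {..t j}})"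
    using prob_indep_vars_all_in[OF assms(1-3), of "\<lambda>j. {..t j}"] by simp
  also have "\<dots> = (\<Prod>j\<in>J. exp (- (1 / t j)))"
    using assms(4,5) by (intro prod.cong) (auto simp: std_frechet_def)
  also have "\<dots> = exp (- (\<Sum>j\<in>J. 1 / t j))"
    using exp_sum[OF assms(3), of "\<lambda>j. - (1 / t j)"] by (simp add: sum_negf)
  finally show ?thesis .
qed

locale frechet_max_field = prob_space M
  for M :: "'a measure" and Xh :: "nat \<Rightarrow> real^2 \<Rightarrow> 'a \<Rightarrow> real" and Z :: "nat \<Rightarrow> 'a \<Rightarrow> real"
    and \<alpha> :: "real^2 \<Rightarrow> real" and x :: "real^2" +
  assumes indep: "indep_vars (\<lambda>_. borel) (joint_family Xh Z) (range Inl \<union> Inr ` {1..})"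
    and Xh_std_frechet: "\<And>k y. std_frechet M (Xh k y)"
    and Z_std_frechet: "\<And>k. 1 \<le> k \<Longrightarrow> std_frechet M (Z k)"
    and alpha_pos: "0 < \<alpha> x"
begin

abbreviation Y :: "nat \<Rightarrow> 'a \<Rightarrow> real" where
  "Y m \<equiv> Yfield Xh Z \<alpha> m x"

text \<open>The events Z_m^(1/alpha) <= y and Z_m <= y^alpha agree only where Z_m > 0 (for a negative
  base, powr takes the absolute value), hence the almost-sure formulations below.\<close>

lemma Y_le_iff:
  assumes "0 < y" "0 < Z m \<omega>"
  shows "Y m \<omega> \<le> y \<longleftrightarrow> Xh (m - 1) x \<omega> \<le> 3 * y \<and> Xh m x \<omega> \<le> 3 * y / 2 \<and> Z m \<omega> \<le> y powr \<alpha> x"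
  using powr_inverse_le_iff[OF assms(2,1) alpha_pos] by (auto simp: Yfield_def Xfield_def)

lemma events_Y_le:
  assumes "1 \<le> m"
  shows "{\<omega> \<in> space M. Y m \<omega> \<le> y} \<in> events"
proof -
  have "Xh k x \<in> borel_measurable M" "Z m \<in> borel_measurable M" for k
    using Xh_std_frechet Z_std_frechet[OF assms] by (auto simp: std_frechet_def)
  then have "Y m \<in> borel_measurable M"
    unfolding Yfield_def[abs_def] Xfield_def by measurable
  then show ?thesis by measurable
qed

lemma AE_Z_pos: "1 \<le> m \<Longrightarrow> AE \<omega> in M. 0 < Z m \<omega>"
  using std_frechet_AE_pos[OF Z_std_frechet] .

lemma prob_eq_exp_sum:
  assumes "J \<subseteq> range Inl \<union> Inr ` {1..}" "finite J" "\<And>j. j \<in> J \<Longrightarrow> 0 < t j"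
    and "AE \<omega> in M. P \<omega> \<longleftrightarrow> (\<forall>j\<in>J. joint_family Xh Z j \<omega> \<le> t j)"
    and "{\<omega> \<in> space M. P \<omega>} \<in> events"
  shows "prob {\<omega> \<in> space M. P \<omega>} = exp (- (\<Sum>j\<in>J. 1 / t j))"
proof -
  have frechet: "std_frechet M (joint_family Xh Z j)" if "j \<in> J" for j
    using that assms(1) Xh_std_frechet Z_std_frechet by (auto simp: joint_family_def)
  then have "{\<omega> \<in> space M. \<forall>j\<in>J. joint_family Xh Z j \<omega> \<le> t j} \<in> events"
    using assms(2)
    by (intro sets.sets_Collect_finite_All) (auto simp: std_frechet_def borel_measurable_iff_le)
  then have "prob {\<omega> \<in> space M. P \<omega>} = prob {\<omega> \<in> space M. \<forall>j\<in>J. joint_family Xh Z j \<omega> \<le> t j}"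
    by (rule prob_eq_AE[OF assms(4,5)])
  also have "\<dots> = exp (- (\<Sum>j\<in>J. 1 / t j))"
    by (rule prob_indep_std_frechet_all_le[OF indep assms(1,2) frechet assms(3)])
  finally show ?thesis .
qed

lemma prob_Y_le:
  assumes "1 \<le> m" "0 < y"
  shows "prob {\<omega> \<in> space M. Y m \<omega> \<le> y} = exp (- tail_rate (\<alpha> x) y)"
proof -
  let ?J = "{Inl (m - 1, x), Inl (m, x), Inr m}"
  have distinct: "m - 1 \<noteq> m" using assms(1) by arith
  define t where "t j = (if j = Inl (m, x) then 3 * y / 2 else if j = Inr m then y powr \<alpha> x
    else 3 * y)" for j
  have "prob {\<omega> \<in> space M. Y m \<omega> \<le> y} = exp (- (\<Sum>j\<in>?J. 1 / t j))"
  proof (rule prob_eq_exp_sum)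
    show "AE \<omega> in M. Y m \<omega> \<le> y \<longleftrightarrow> (\<forall>j\<in>?J. joint_family Xh Z j \<omega> \<le> t j)"
      using AE_Z_pos[OF assms(1)]
      by eventually_elim (use assms in \<open>auto simp: Y_le_iff t_def joint_family_def\<close>)
  qed (use assms in \<open>auto simp: t_def events_Y_le\<close>)
  also have "(\<Sum>j\<in>?J. 1 / t j) = tail_rate (\<alpha> x) y"
    using assms distinct by (simp add: t_def tail_rate_def powr_minus_divide)
  finally show ?thesis .
qed

lemma prob_Y_le_Y_succ_le:
  assumes "1 \<le> m" "0 < y"
  shows "prob {\<omega> \<in> space M. Y m \<omega> \<le> y \<and> Y (m + 1) \<omega> \<le> y}
    = exp (1 / (3 * y) - 2 * tail_rate (\<alpha> x) y)"
proof -
  let ?J = "{Inl (m - 1, x), Inl (m, x), Inl (m + 1, x), Inr m, Inr (m + 1)}"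
  have distinct: "m - 1 \<noteq> m" "m - 1 \<noteq> m + 1" using assms(1) by arith+
  txt \<open>Xh m x enters Y m through the bound 3y/2 and Y (m + 1) through 3y; only the first binds.\<close>
  define t where "t j = (if j = Inl (m - 1, x) then 3 * y
    else if j = Inr m \<or> j = Inr (m + 1) then y powr \<alpha> x else 3 * y / 2)" for j
  have "prob {\<omega> \<in> space M. Y m \<omega> \<le> y \<and> Y (m + 1) \<omega> \<le> y} = exp (- (\<Sum>j\<in>?J. 1 / t j))"
  proof (rule prob_eq_exp_sum)
    show "AE \<omega> in M. Y m \<omega> \<le> y \<and> Y (m + 1) \<omega> \<le> y \<longleftrightarrow> (\<forall>j\<in>?J. joint_family Xh Z j \<omega> \<le> t j)"
      using AE_Z_pos[OF assms(1)] AE_Z_pos[of "m + 1", OF le_add2]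
      by eventually_elim (use assms in \<open>auto simp: Y_le_iff t_def joint_family_def Suc_le_eq\<close>)
  qed (use assms in \<open>auto simp: t_def intro!: sets.sets_Collect_conj events_Y_le\<close>)
  also have "- (\<Sum>j\<in>?J. 1 / t j) = 1 / (3 * y) - 2 * tail_rate (\<alpha> x) y"
    using assms distinct by (simp add: t_def tail_rate_def powr_minus_divide)
  finally show ?thesis .
qed

lemma prob_Y_le_Y_far_le:
  assumes "1 \<le> m" "2 \<le> r" "0 < y"
  shows "prob {\<omega> \<in> space M. Y m \<omega> \<le> y \<and> Y (m + r) \<omega> \<le> y} = exp (- 2 * tail_rate (\<alpha> x) y)"
proof -
  let ?J = "{Inl (m - 1, x), Inl (m, x), Inr m, Inl (m + r - 1, x), Inl (m + r, x), Inr (m + r)}"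
  have distinct: "m - 1 \<noteq> m" "m - 1 \<noteq> m + r - 1" "m - 1 \<noteq> m + r" "m \<noteq> m + r - 1"
    "m \<noteq> m + r" "m + r - 1 \<noteq> m + r"
    using assms(1,2) by arith+
  define t where "t j = (if j = Inl (m, x) \<or> j = Inl (m + r, x) then 3 * y / 2
    else if j = Inr m \<or> j = Inr (m + r) then y powr \<alpha> x else 3 * y)" for j
  have "prob {\<omega> \<in> space M. Y m \<omega> \<le> y \<and> Y (m + r) \<omega> \<le> y} = exp (- (\<Sum>j\<in>?J. 1 / t j))"
  proof (rule prob_eq_exp_sum)
    show "AE \<omega> in M. Y m \<omega> \<le> y \<and> Y (m + r) \<omega> \<le> y \<longleftrightarrow> (\<forall>j\<in>?J. joint_family Xh Z j \<omega> \<le> t j)"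
      using AE_Z_pos[OF assms(1)] AE_Z_pos[of "m + r", OF trans_le_add1[OF assms(1)]]
      by eventually_elim (use assms in \<open>auto simp: Y_le_iff t_def joint_family_def\<close>)
  qed (use assms in \<open>auto simp: t_def intro!: sets.sets_Collect_conj events_Y_le\<close>)
  also have "- (\<Sum>j\<in>?J. 1 / t j) = - 2 * tail_rate (\<alpha> x) y"
    using assms distinct by (simp add: t_def tail_rate_def powr_minus_divide)
  finally show ?thesis .
qed

lemma prob_Y_gt:
  assumes "1 \<le> m" "0 < y"
  shows "prob {\<omega> \<in> space M. Y m \<omega> > y} = tail_prob (\<alpha> x) y"
  using prob_neg[OF events_Y_le[OF assms(1)]] prob_Y_le[OF assms] by (simp add: not_le tail_prob_def)

lemma prob_Y_succ_gt_Y_gt: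
  assumes "1 \<le> m" "0 < y"
  shows "prob {\<omega> \<in> space M. Y (m + 1) \<omega> > y \<and> Y m \<omega> > y}
    = tail_prob (\<alpha> x) y ^ 2 + lag_one_excess (\<alpha> x) y"
proof -
  let ?u = "tail_rate (\<alpha> x) y"
  have "prob {\<omega> \<in> space M. Y (m + 1) \<omega> > y \<and> Y m \<omega> > y}
      = 1 - exp (- ?u) - exp (- ?u) + exp (1 / (3 * y) - 2 * ?u)"
    using prob_both_gt[OF events_Y_le[OF assms(1)] events_Y_le[of "m + 1"]]
      prob_Y_le[OF assms] prob_Y_le[of "m + 1"] prob_Y_le_Y_succ_le[OF assms] assms
    by simp
  also have "exp (1 / (3 * y) - 2 * ?u) = exp (- ?u) ^ 2 * exp (1 / (3 * y))"
    by (simp add: power2_eq_square flip: exp_add)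
  finally show ?thesis
    by (simp add: tail_prob_def lag_one_excess_def exp_double_tail_rate power2_eq_square algebra_simps)
qed

lemma prob_Y_far_gt_Y_gt:
  assumes "1 \<le> m" "2 \<le> r" "0 < y"
  shows "prob {\<omega> \<in> space M. Y (m + r) \<omega> > y \<and> Y m \<omega> > y} = tail_prob (\<alpha> x) y ^ 2"
proof -
  let ?u = "tail_rate (\<alpha> x) y"
  have "prob {\<omega> \<in> space M. Y (m + r) \<omega> > y \<and> Y m \<omega> > y}
      = 1 - exp (- ?u) - exp (- ?u) + exp (- 2 * ?u)"
    using prob_both_gt[OF events_Y_le[OF assms(1)] events_Y_le[of "m + r"]]
      prob_Y_le[OF assms(1,3)] prob_Y_le[of "m + r"] prob_Y_le_Y_far_le[OF assms] assms
    by simp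
  then show ?thesis
    by (simp add: tail_prob_def exp_double_tail_rate power2_eq_square algebra_simps)
qed

lemma eventually_prob_Y_gt_pos:
  assumes "1 \<le> m"
  shows "\<forall>\<^sub>F y in at_top. 0 < prob {\<omega> \<in> space M. Y m \<omega> > y}"
  using eventually_gt_at_top[of 0] by eventually_elim (simp add: prob_Y_gt[OF assms] tail_prob_pos)

lemma tendsto_succ_tail_ratio:
  assumes "1 \<le> m"
  shows "\<exists>c>0. ((\<lambda>y. prob {\<omega> \<in> space M. Y (m + 1) \<omega> > y \<and> Y m \<omega> > y}
    / prob {\<omega> \<in> space M. Y m \<omega> > y} powr (1 / lag_one_eta (\<alpha> x))) \<longlongrightarrow> c) at_top"
proof -
  obtain c where "0 < c" and lim: "((\<lambda>y. (tail_prob (\<alpha> x) y ^ 2 + lag_one_excess (\<alpha> x) y)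
      / tail_prob (\<alpha> x) y powr (1 / lag_one_eta (\<alpha> x))) \<longlongrightarrow> c) at_top"
    using tendsto_lag_one_ratio[OF alpha_pos] by blast
  have "\<forall>\<^sub>F y in at_top. (tail_prob (\<alpha> x) y ^ 2 + lag_one_excess (\<alpha> x) y)
      / tail_prob (\<alpha> x) y powr (1 / lag_one_eta (\<alpha> x))
    = prob {\<omega> \<in> space M. Y (m + 1) \<omega> > y \<and> Y m \<omega> > y}
      / prob {\<omega> \<in> space M. Y m \<omega> > y} powr (1 / lag_one_eta (\<alpha> x))"
    using eventually_gt_at_top[of 0]
    by eventually_elim (simp only: prob_Y_gt[OF assms] prob_Y_succ_gt_Y_gt[OF assms])
  with lim \<open>0 < c\<close> show ?thesis
    by (blast intro: Lim_transform_eventually)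
qed

lemma tendsto_far_tail_ratio:
  assumes "1 \<le> m" "2 \<le> r"
  shows "((\<lambda>y. prob {\<omega> \<in> space M. Y (m + r) \<omega> > y \<and> Y m \<omega> > y}
    / prob {\<omega> \<in> space M. Y m \<omega> > y} powr (1 / (1/2))) \<longlongrightarrow> 1) at_top"
proof -
  have "\<forall>\<^sub>F y in at_top. 1 = prob {\<omega> \<in> space M. Y (m + r) \<omega> > y \<and> Y m \<omega> > y}
      / prob {\<omega> \<in> space M. Y m \<omega> > y} powr (1 / (1/2))"
    using eventually_gt_at_top[of 0]
  proof eventually_elim
    case (elim y)
    then show ?case
      using prob_Y_gt[OF assms(1) elim] prob_Y_far_gt_Y_gt[OF assms elim]
        tail_prob_pos[OF elim, of "\<alpha> x"]
      by (simp add: powr_numeral)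
  qed
  then show ?thesis by (rule Lim_transform_eventually[OF tendsto_const])
qed

end

theorem mainTheorem4:
  fixes M :: "'a measure"
    and Xh :: "nat \<Rightarrow> real^2 \<Rightarrow> 'a \<Rightarrow> real"
    and Z :: "nat \<Rightarrow> 'a \<Rightarrow> real"
    and \<alpha> :: "real^2 \<Rightarrow> real"
    and x :: "real^2" and n r :: nat
  assumes "prob_space M"
    and "prob_space.indep_vars M (\<lambda>_. borel) (joint_family Xh Z) (range Inl \<union> Inr ` {1..})"
    and "\<And>k y. std_frechet M (Xh k y)"
    and "\<And>k. k \<ge> 1 \<Longrightarrow> std_frechet M (Z k)"
    and "\<And>y. \<alpha> y > 0"
    and "n \<ge> 1" and "r \<ge> 1"
  shows "residual_tdc M (Yfield Xh Z \<alpha> n x) (Yfield Xh Z \<alpha> (n + r) x)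
     (if \<alpha> x < 1 \<and> r = 1 then max (1/2) (\<alpha> x)
      else if \<alpha> x \<ge> 1 \<and> r = 1 then 1 else 1/2)"
proof -
  interpret frechet_max_field M Xh Z \<alpha> x
    using assms(1-5) by (intro frechet_max_field.intro frechet_max_field_axioms.intro) auto
  show ?thesis
  proof (cases "r = 1")
    case True
    then have "(if \<alpha> x < 1 \<and> r = 1 then max (1/2) (\<alpha> x) else if \<alpha> x \<ge> 1 \<and> r = 1 then 1 else 1/2)
        = lag_one_eta (\<alpha> x)"
      by (simp add: lag_one_eta_def)
    moreover obtain c where "0 < c" and "((\<lambda>y. prob {\<omega> \<in> space M. Y (n + r) \<omega> > y \<and> Y n \<omega> > y}
        / prob {\<omega> \<in> space M. Y n \<omega> > y} powr (1 / lag_one_eta (\<alpha> x))) \<longlongrightarrow> c) at_top"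
      using tendsto_succ_tail_ratio[OF assms(6)] True by blast
    ultimately show ?thesis
      using eventually_prob_Y_gt_pos[OF assms(6)] lag_one_eta_bounds[of "\<alpha> x"]
      by (auto intro: residual_tdc_if_tendsto_ratio)
  next
    case False
    then have "2 \<le> r" using assms(7) by simp
    moreover have "(if \<alpha> x < 1 \<and> r = 1 then max (1/2) (\<alpha> x) else if \<alpha> x \<ge> 1 \<and> r = 1 then 1 else 1/2)
        = (1/2 :: real)"
      using False by simp
    ultimately show ?thesis
      using residual_tdc_if_tendsto_ratio[OF _ _ eventually_prob_Y_gt_pos[OF assms(6)]
          tendsto_far_tail_ratio[OF assms(6)]]
      by simp
  qed
qed

end
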